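(* Let $\beta\in(0,1/2]$, $p\asymp d^{1-\beta}$ as $d\to\infty$, and suppose $\lim_{d\to\infty}\frac{r^2nh(\tau)}{\sqrt d}=0$. Then for the Rademacher prior, $\mathbf E_0[L^2_{\pi,r}(Z)]\to1$ as $d\to\infty$.
   Context: Model: for integers $n\ge2$, $d\ge1$ and a fixed baseline mean $\theta\in\mathbb R^d$, we observe independent vectors $X_i=\theta+\Delta\theta\,\mathbf 1\{i>\tau\}+\xi_i$, $i=1,\dots,n$, $\tau\in\{1,\dots,n-1\}$, with $\xi_i$ i.i.d. $\mathcal N(0,I_d)$. $Z=(Z_n^j(s))_{j\le d,s\le n-1}$ where $Z_n^j(s)$ is the $j$-th coordinate of $Z_n(s)=\sqrt{\frac{s(n-s)}n}\bigl(\frac1s\sum_{i=1}^sX_i-\frac1{n-s}\sum_{i=s+1}^nX_i\bigr)$. $h(\tau)=\frac\tau n(1-\frac\tau n)$. Rademacher prior: draw $m$ uniformly among $p$-element subsets of $\{1,\dots,d\}$ and independent uniform signs $\varepsilon_j\in\{\pm1\}$, and set $\Delta\theta_j=\frac r{\sqrt p}\varepsilon_j$ for $j\in m$, $\Delta\theta_j=0$ otherwise. $\mathbf P_{\pi,r}$ is the resulting mixture law of $Z$, $\mathbf P_0$ its law under $\Delta\theta=0$, $L_{\pi,r}=d\mathbf P_{\pi,r}/d\mathbf P_0$. All quantities ($n,p,r,\tau$) are indexed by $d\to\infty$; $a\asymp b$ means $a/b$ is bounded above and below by positive constants. *)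

theory Defs
  imports "HOL-Probability.Probability"
begin

definition obs_law ::
  "nat \<Rightarrow> nat \<Rightarrow> nat \<Rightarrow> (nat \<Rightarrow> real) \<Rightarrow> (nat \<Rightarrow> real) \<Rightarrow> (nat \<times> nat \<Rightarrow> real) measure" where
  "obs_law d n \<tau> \<theta> \<Delta> =
     PiM ({1..d} \<times> {1..n})
       (\<lambda>(j,i). density lborel (normal_density (\<theta> j + (if i > \<tau> then \<Delta> j else 0)) 1))"

definition Zstat :: "nat \<Rightarrow> nat \<Rightarrow> (nat \<times> nat \<Rightarrow> real) \<Rightarrow> (nat \<times> nat \<Rightarrow> real)" where
  "Zstat d n x = restrict (\<lambda>(j,s).
      sqrt (real s * real (n - s) / real n) *
        ((\<Sum>i=1..s. x (j,i)) / real s - (\<Sum>i=s+1..n. x (j,i)) / real (n - s)))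
      ({1..d} \<times> {1..n-1})"

definition Z_law ::
  "nat \<Rightarrow> nat \<Rightarrow> nat \<Rightarrow> (nat \<Rightarrow> real) \<Rightarrow> (nat \<Rightarrow> real) \<Rightarrow> (nat \<times> nat \<Rightarrow> real) measure" where
  "Z_law d n \<tau> \<theta> \<Delta> =
     distr (obs_law d n \<tau> \<theta> \<Delta>) (PiM ({1..d} \<times> {1..n-1}) (\<lambda>_. lborel)) (Zstat d n)"

definition rad_prior :: "nat \<Rightarrow> nat \<Rightarrow> real \<Rightarrow> (nat \<Rightarrow> real) pmf" where
  "rad_prior d p r =
     map_pmf (\<lambda>(m, \<epsilon>). \<lambda>j. if j \<in> m then r / sqrt (real p) * \<epsilon> j else 0)
       (pmf_of_set {(m, \<epsilon>). m \<subseteq> {1..d} \<and> card m = p \<and> \<epsilon> \<in> PiE m (\<lambda>_. {-1, 1::real})})"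

definition mix_law ::
  "nat \<Rightarrow> nat \<Rightarrow> nat \<Rightarrow> (nat \<Rightarrow> real) \<Rightarrow> nat \<Rightarrow> real \<Rightarrow> (nat \<times> nat \<Rightarrow> real) measure" where
  "mix_law d n \<tau> \<theta> p r = measure_pmf (rad_prior d p r) \<bind> (\<lambda>\<Delta>. Z_law d n \<tau> \<theta> \<Delta>)"

definition null_law ::
  "nat \<Rightarrow> nat \<Rightarrow> nat \<Rightarrow> (nat \<Rightarrow> real) \<Rightarrow> (nat \<times> nat \<Rightarrow> real) measure" where
  "null_law d n \<tau> \<theta> = Z_law d n \<tau> \<theta> (\<lambda>_. 0)"

definition lik_ratio ::
  "nat \<Rightarrow> nat \<Rightarrow> nat \<Rightarrow> (nat \<Rightarrow> real) \<Rightarrow> nat \<Rightarrow> real \<Rightarrow> (nat \<times> nat \<Rightarrow> real) \<Rightarrow> ennreal" where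
  "lik_ratio d n \<tau> \<theta> p r = RN_deriv (null_law d n \<tau> \<theta>) (mix_law d n \<tau> \<theta> p r)"

definition chi2_moment ::
  "nat \<Rightarrow> nat \<Rightarrow> nat \<Rightarrow> (nat \<Rightarrow> real) \<Rightarrow> nat \<Rightarrow> real \<Rightarrow> ennreal" where
  "chi2_moment d n \<tau> \<theta> p r =
     (\<integral>\<^sup>+ z. (lik_ratio d n \<tau> \<theta> p r z)\<^sup>2 \<partial>null_law d n \<tau> \<theta>)"

definition hfun :: "nat \<Rightarrow> nat \<Rightarrow> real" where
  "hfun n \<tau> = (real \<tau> / real n) * (1 - real \<tau> / real n)"

end

theory Submission
  imports Defs
begin

text \<open>
  The statistic Z is unchanged when a constant is added to every observation of one coordinate.
  Shifting the baseline by the average change, the mean of \<open>X\<^sub>i\<^sup>j\<close> becomes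
  \<open>\<theta>\<^sub>j + \<Delta>\<theta>\<^sub>j w\<^sub>i\<close> with centred weights
  \<open>w\<^sub>i = 1{i > \<tau>} - (n - \<tau>)/n\<close>, and the Gaussian likelihood ratio of this shift depends
  on X only through \<open>Z\<^sub>n(\<tau>)\<close>. Hence the law of Z under the alternative \<open>\<Delta>\<theta>\<close> has density
  \<open>exp (- \<surd>(n h) \<langle>\<Delta>\<theta>, Z\<^sub>n(\<tau>)\<rangle> - n h |\<Delta>\<theta>|\<^sup>2 / 2)\<close> with respect to the null law,
  and \<open>E\<^sub>0 L\<^sup>2 = E exp (n h(\<tau>) \<langle>\<Delta>\<theta>, \<Delta>\<theta>'\<rangle>)\<close> for two independent draws from the prior.
  For the Rademacher prior this is \<open>E exp (a \<langle>s, s'\<rangle>)\<close> with \<open>a = n h r\<^sup>2 / p\<close> and independent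
  signed p-sparse sign vectors s, s'. Averaging over the signs gives \<open>cosh a\<close> to the power
  \<open>|m \<inter> m'|\<close>, and comparing this hypergeometric overlap with a binomial one bounds the
  second moment by \<open>(1 + (cosh a - 1) p / d)\<^sup>p \<le> exp ((n h r\<^sup>2)\<^sup>2 / d)\<close>, valid once
  \<open>a \<le> 1\<close>; both hold eventually because \<open>p \<ge> c \<surd>d\<close>, and the bound tends to 1.
\<close>

section \<open>Product measures\<close>

lemma PiM_density:
  assumes I: "finite I" and N: "\<And>i. prob_space (N i)"
    and g[measurable]: "\<And>i. g i \<in> borel_measurable (N i)"
    and D: "\<And>i. prob_space (density (N i) (g i))"
  shows "PiM I (\<lambda>i. density (N i) (g i)) = density (PiM I N) (\<lambda>x. \<Prod>i\<in>I. g i (x i))"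
proof -
  interpret PN: product_prob_space N by (intro product_prob_spaceI N)
  interpret PD: product_prob_space "\<lambda>i. density (N i) (g i)" by (intro product_prob_spaceI D)
  show ?thesis
  proof (rule PD.PiM_eqI[symmetric])
    show "sets (density (PiM I N) (\<lambda>x. \<Prod>i\<in>I. g i (x i))) = sets (PiM I (\<lambda>i. density (N i) (g i)))"
      unfolding sets_density by (intro sets_PiM_cong refl) simp
    fix A assume A: "\<And>i. i \<in> I \<Longrightarrow> A i \<in> sets (density (N i) (g i))"
    hence A': "\<And>i. i \<in> I \<Longrightarrow> A i \<in> sets (N i)" by simp
    have "emeasure (density (PiM I N) (\<lambda>x. \<Prod>i\<in>I. g i (x i))) (PiE I A)
        = (\<integral>\<^sup>+x. (\<Prod>i\<in>I. g i (x i)) * indicator (PiE I A) x \<partial>PiM I N)"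
      using A' I by (intro emeasure_density) (auto intro!: sets_PiM_I_finite)
    also have "\<dots> = (\<integral>\<^sup>+x. (\<Prod>i\<in>I. g i (x i) * indicator (A i) (x i)) \<partial>PiM I N)"
    proof (rule nn_integral_cong)
      fix x assume "x \<in> space (PiM I N)"
      hence "x \<in> extensional I" by (simp add: space_PiM PiE_def)
      thus "(\<Prod>i\<in>I. g i (x i)) * indicator (PiE I A) x = (\<Prod>i\<in>I. g i (x i) * indicator (A i) (x i))"
        by (auto simp: prod.distrib indicator_def PiE_def Pi_def I)
    qed
    also have "\<dots> = (\<Prod>i\<in>I. \<integral>\<^sup>+y. g i y * indicator (A i) y \<partial>N i)"
      using A' by (intro PN.product_nn_integral_prod I) auto
    also have "\<dots> = (\<Prod>i\<in>I. emeasure (density (N i) (g i)) (A i))"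
      using A' by (intro prod.cong refl) (simp add: emeasure_density)
    finally show "emeasure (density (PiM I N) (\<lambda>x. \<Prod>i\<in>I. g i (x i))) (PiE I A)
        = (\<Prod>i\<in>I. emeasure (density (N i) (g i)) (A i))" .
  qed fact
qed

lemma distr_PiM_componentwise:
  assumes I: "finite I" and M: "\<And>i. prob_space (M i)" and M': "\<And>i. prob_space (M' i)"
    and f: "\<And>i. i \<in> I \<Longrightarrow> f i \<in> measurable (M i) (M' i)"
    and T: "(\<lambda>x. \<lambda>i\<in>I. f i (x i)) \<in> measurable (PiM I M) (PiM I M')"
  shows "distr (PiM I M) (PiM I M') (\<lambda>x. \<lambda>i\<in>I. f i (x i)) = PiM I (\<lambda>i. distr (M i) (M' i) (f i))"
proof -
  interpret M: product_prob_space M by (intro product_prob_spaceI M)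
  define N where "N i = (if i \<in> I then distr (M i) (M' i) (f i) else M' i)" for i
  interpret N: product_prob_space N
    by (intro product_prob_spaceI) (auto simp: N_def M' f intro: prob_space.prob_space_distr M)
  have sets_N: "sets (PiM I N) = sets (PiM I M')"
    unfolding N_def by (intro sets_PiM_cong) auto
  have "distr (PiM I M) (PiM I M') (\<lambda>x. \<lambda>i\<in>I. f i (x i)) = PiM I N"
  proof (rule N.PiM_eqI[OF I])
    show "sets (distr (PiM I M) (PiM I M') (\<lambda>x. \<lambda>i\<in>I. f i (x i))) = sets (PiM I N)"
      using sets_N by simp
    fix A assume A: "\<And>i. i \<in> I \<Longrightarrow> A i \<in> sets (N i)"
    have "PiE I A \<in> sets (PiM I M')"
      using A by (auto simp: N_def intro!: sets_PiM_I_finite I)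
    hence "emeasure (distr (PiM I M) (PiM I M') (\<lambda>x. \<lambda>i\<in>I. f i (x i))) (PiE I A)
        = emeasure (PiM I M) ((\<lambda>x. \<lambda>i\<in>I. f i (x i)) -` PiE I A \<inter> space (PiM I M))"
      by (rule emeasure_distr[OF T])
    also have "(\<lambda>x. \<lambda>i\<in>I. f i (x i)) -` PiE I A \<inter> space (PiM I M) = PiE I (\<lambda>i. f i -` A i \<inter> space (M i))"
      using A by (auto simp: space_PiM PiE_def Pi_def extensional_def N_def)
    also have "emeasure (PiM I M) (PiE I (\<lambda>i. f i -` A i \<inter> space (M i)))
        = (\<Prod>i\<in>I. emeasure (M i) (f i -` A i \<inter> space (M i)))"
      using A f by (intro M.emeasure_PiM I) (auto simp: N_def)
    also have "\<dots> = (\<Prod>i\<in>I. emeasure (N i) (A i))"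
      using A f by (intro prod.cong) (auto simp: N_def emeasure_distr)
    finally show "emeasure (distr (PiM I M) (PiM I M') (\<lambda>x. \<lambda>i\<in>I. f i (x i))) (PiE I A)
        = (\<Prod>i\<in>I. emeasure (N i) (A i))" .
  qed
  also have "PiM I N = PiM I (\<lambda>i. distr (M i) (M' i) (f i))"
    by (intro PiM_cong) (auto simp: N_def)
  finally show ?thesis .
qed

lemma translate_measurable:
  assumes "\<And>k. sets (M k) = sets lborel" "\<And>k. sets (M' k) = sets lborel"
  shows "(\<lambda>x. \<lambda>k\<in>I. x k + c (fst k)) \<in> measurable (PiM I M) (PiM I M')"
proof (rule measurable_restrict)
  fix k assume k: "k \<in> I"
  have "measurable (PiM I M) (M k) = borel_measurable (PiM I M)"
    by (rule measurable_cong_sets) (simp_all only: assms sets_lborel)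
  hence "(\<lambda>x. x k) \<in> borel_measurable (PiM I M)"
    using measurable_component_singleton[OF k, of M] by simp
  hence "(\<lambda>x. x k + c (fst k)) \<in> borel_measurable (PiM I M)" by simp
  moreover have "measurable (PiM I M) (M' k) = borel_measurable (PiM I M)"
    by (rule measurable_cong_sets) (simp_all only: assms sets_lborel)
  ultimately show "(\<lambda>x. x k + c (fst k)) \<in> measurable (PiM I M) (M' k)" by simp
qed

lemma normal_density_shift_ratio:
  "normal_density \<mu> 1 x = normal_density \<nu> 1 x * exp ((\<mu> - \<nu>) * (x - \<nu>) - (\<mu> - \<nu>)\<^sup>2 / 2)"
proof -
  have "- ((x - \<mu>)\<^sup>2 / 2) = - ((x - \<nu>)\<^sup>2 / 2) + ((\<mu> - \<nu>) * (x - \<nu>) - (\<mu> - \<nu>)\<^sup>2 / 2)"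
    by (simp add: power2_eq_square field_simps)
  thus ?thesis unfolding normal_density_def by (simp add: mult_exp_exp)
qed

lemma distr_normal_density_translate:
  "distr (density lborel (normal_density \<mu> 1)) lborel (\<lambda>x. x + c) = density lborel (normal_density (\<mu> + c) 1)"
proof -
  interpret prob_space "density lborel (normal_density \<mu> 1)"
    by (simp add: prob_space_normal_density)
  have "distributed (density lborel (normal_density \<mu> 1)) lborel (\<lambda>x. x) (normal_density \<mu> 1)"
    by (simp add: distributed_def distr_id2)
  from normal_density_affine[OF this, of 1 c] show ?thesis
    by (simp add: distributed_def add.commute)
qed

section \<open>CUSUM weights and the likelihood ratio of the statistic\<close>

definition cusum_weight :: "nat \<Rightarrow> nat \<Rightarrow> nat \<Rightarrow> real" where
  "cusum_weight n \<tau> i = (if \<tau> < i then 1 else 0) - real (n - \<tau>) / real n"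

definition cusum_scale :: "nat \<Rightarrow> nat \<Rightarrow> real" where
  "cusum_scale n \<tau> = real \<tau> * real (n - \<tau>) / real n"

lemma cusum_scale_nonneg: "cusum_scale n \<tau> \<ge> 0"
  by (simp add: cusum_scale_def)

lemma sum_cusum_weight_mult:
  assumes "1 \<le> \<tau>" "\<tau> < n"
  shows "(\<Sum>i=1..n. cusum_weight n \<tau> i * x i)
       = - cusum_scale n \<tau> * ((\<Sum>i=1..\<tau>. x i) / real \<tau> - (\<Sum>i=\<tau>+1..n. x i) / real (n - \<tau>))"
proof -
  have "{1..n} = {1..\<tau>} \<union> {\<tau>+1..n}" "{1..\<tau>} \<inter> {\<tau>+1..n} = {}" using assms by auto
  hence "(\<Sum>i=1..n. cusum_weight n \<tau> i * x i)
      = (\<Sum>i=1..\<tau>. cusum_weight n \<tau> i * x i) + (\<Sum>i=\<tau>+1..n. cusum_weight n \<tau> i * x i)"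
    by (metis finite_atLeastAtMost sum.union_disjoint)
  also have "(\<Sum>i=1..\<tau>. cusum_weight n \<tau> i * x i) = - (real (n - \<tau>) / real n) * (\<Sum>i=1..\<tau>. x i)"
    by (simp add: cusum_weight_def sum_distrib_left)
  also have "(\<Sum>i=\<tau>+1..n. cusum_weight n \<tau> i * x i) = (1 - real (n - \<tau>) / real n) * (\<Sum>i=\<tau>+1..n. x i)"
    by (simp add: cusum_weight_def sum_distrib_left)
  also have "- (real (n - \<tau>) / real n) * (\<Sum>i=1..\<tau>. x i) + (1 - real (n - \<tau>) / real n) * (\<Sum>i=\<tau>+1..n. x i)
      = - cusum_scale n \<tau> * ((\<Sum>i=1..\<tau>. x i) / real \<tau> - (\<Sum>i=\<tau>+1..n. x i) / real (n - \<tau>))"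
    using assms unfolding cusum_scale_def of_nat_diff[OF less_imp_le[OF assms(2)]]
    by (simp add: field_simps)
  finally show ?thesis .
qed

lemma sum_cusum_weight:
  assumes "1 \<le> \<tau>" "\<tau> < n"
  shows "(\<Sum>i=1..n. cusum_weight n \<tau> i) = 0"
  using sum_cusum_weight_mult[OF assms, of "\<lambda>_. 1"] assms by simp

lemma sum_cusum_weight_sq:
  assumes "1 \<le> \<tau>" "\<tau> < n"
  shows "(\<Sum>i=1..n. (cusum_weight n \<tau> i)\<^sup>2) = cusum_scale n \<tau>"
proof -
  have "(\<Sum>i=1..\<tau>. cusum_weight n \<tau> i) = real \<tau> * - (real (n - \<tau>) / real n)"
    by (simp add: cusum_weight_def)
  moreover have "(\<Sum>i=\<tau>+1..n. cusum_weight n \<tau> i) = real (n - \<tau>) * (1 - real (n - \<tau>) / real n)"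
    using assms by (simp add: cusum_weight_def)
  moreover have "real \<tau> * - (real (n - \<tau>) / real n) / real \<tau> - real (n - \<tau>) * (1 - real (n - \<tau>) / real n) / real (n - \<tau>) = -1"
    using assms by (simp add: field_simps of_nat_diff)
  ultimately show ?thesis
    using sum_cusum_weight_mult[OF assms, of "cusum_weight n \<tau>"] by (simp add: power2_eq_square)
qed

lemma sum_gaussian_log_ratio:
  assumes "1 \<le> \<tau>" "\<tau> < n"
  shows "(\<Sum>i=1..n. a * cusum_weight n \<tau> i * (x i - t) - (a * cusum_weight n \<tau> i)\<^sup>2 / 2)
       = - sqrt (cusum_scale n \<tau>) * a * (sqrt (cusum_scale n \<tau>) *
           ((\<Sum>i=1..\<tau>. x i) / real \<tau> - (\<Sum>i=\<tau>+1..n. x i) / real (n - \<tau>))) - cusum_scale n \<tau> * a\<^sup>2 / 2"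
proof -
  define D where "D = (\<Sum>i=1..\<tau>. x i) / real \<tau> - (\<Sum>i=\<tau>+1..n. x i) / real (n - \<tau>)"
  define h where "h = cusum_scale n \<tau>"
  have "h \<ge> 0" by (simp add: h_def cusum_scale_nonneg)
  have "(\<Sum>i=1..n. a * cusum_weight n \<tau> i * (x i - t) - (a * cusum_weight n \<tau> i)\<^sup>2 / 2)
      = a * (\<Sum>i=1..n. cusum_weight n \<tau> i * x i) - a * t * (\<Sum>i=1..n. cusum_weight n \<tau> i)
        - a\<^sup>2 / 2 * (\<Sum>i=1..n. (cusum_weight n \<tau> i)\<^sup>2)"
    by (simp add: sum_subtractf sum.distrib sum_distrib_left power_mult_distrib algebra_simps)
  also have "\<dots> = a * (- h * D) - a * t * 0 - a\<^sup>2 / 2 * h"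
    unfolding D_def h_def
    by (simp only: sum_cusum_weight_mult[OF assms] sum_cusum_weight[OF assms] sum_cusum_weight_sq[OF assms])
  also have "\<dots> = - sqrt h * a * (sqrt h * D) - h * a\<^sup>2 / 2"
  proof -
    have "sqrt h * a * (sqrt h * D) = (sqrt h * sqrt h) * a * D" by (simp only: ac_simps)
    thus ?thesis using \<open>h \<ge> 0\<close> by (simp add: algebra_simps)
  qed
  finally show ?thesis unfolding D_def h_def .
qed

lemma Zstat_at_changepoint:
  assumes "j \<in> {1..d}" "1 \<le> \<tau>" "\<tau> < n"
  shows "Zstat d n x (j, \<tau>) = sqrt (cusum_scale n \<tau>) *
           ((\<Sum>i=1..\<tau>. x (j, i)) / real \<tau> - (\<Sum>i=\<tau>+1..n. x (j, i)) / real (n - \<tau>))"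
  using assms by (simp add: Zstat_def cusum_scale_def)

definition Z_lr :: "nat \<Rightarrow> nat \<Rightarrow> nat \<Rightarrow> (nat \<Rightarrow> real) \<Rightarrow> (nat \<times> nat \<Rightarrow> real) \<Rightarrow> ennreal" where
  "Z_lr d n \<tau> \<Delta> z = ennreal (exp (- sqrt (cusum_scale n \<tau>) * (\<Sum>j\<in>{1..d}. \<Delta> j * z (j, \<tau>))
                                     - cusum_scale n \<tau> * (\<Sum>j\<in>{1..d}. (\<Delta> j)\<^sup>2) / 2))"

lemma prod_obs_lr_eq_Z_lr:
  assumes "1 \<le> \<tau>" "\<tau> < n"
  shows "(\<Prod>(j, i)\<in>{1..d} \<times> {1..n}. ennreal (exp (\<Delta> j * cusum_weight n \<tau> i * (x (j, i) - \<theta> j)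
                                               - (\<Delta> j * cusum_weight n \<tau> i)\<^sup>2 / 2)))
       = Z_lr d n \<tau> \<Delta> (Zstat d n x)"
proof -
  let ?h = "cusum_scale n \<tau>"
  have "(\<Sum>(j, i)\<in>{1..d} \<times> {1..n}. \<Delta> j * cusum_weight n \<tau> i * (x (j, i) - \<theta> j) - (\<Delta> j * cusum_weight n \<tau> i)\<^sup>2 / 2)
      = (\<Sum>j\<in>{1..d}. \<Sum>i=1..n. \<Delta> j * cusum_weight n \<tau> i * (x (j, i) - \<theta> j) - (\<Delta> j * cusum_weight n \<tau> i)\<^sup>2 / 2)"
    by (simp add: sum.cartesian_product)
  also have "\<dots> = (\<Sum>j\<in>{1..d}. - sqrt ?h * \<Delta> j * Zstat d n x (j, \<tau>) - ?h * (\<Delta> j)\<^sup>2 / 2)"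
  proof (rule sum.cong[OF refl])
    fix j assume j: "j \<in> {1..d}"
    then show "(\<Sum>i=1..n. \<Delta> j * cusum_weight n \<tau> i * (x (j, i) - \<theta> j) - (\<Delta> j * cusum_weight n \<tau> i)\<^sup>2 / 2)
        = - sqrt ?h * \<Delta> j * Zstat d n x (j, \<tau>) - ?h * (\<Delta> j)\<^sup>2 / 2"
      using sum_gaussian_log_ratio[OF assms, of "\<Delta> j" "\<lambda>i. x (j, i)" "\<theta> j"]
        Zstat_at_changepoint[OF j assms] by simp
  qed
  also have "\<dots> = - sqrt ?h * (\<Sum>j\<in>{1..d}. \<Delta> j * Zstat d n x (j, \<tau>)) - ?h * (\<Sum>j\<in>{1..d}. (\<Delta> j)\<^sup>2) / 2"
    by (simp add: sum_subtractf sum_distrib_left sum_divide_distrib algebra_simps)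
  finally show ?thesis
    by (simp add: Z_lr_def prod_ennreal exp_sum case_prod_beta flip: exp_sum)
qed

section \<open>The law of the statistic under a single alternative\<close>

lemma sets_obs_law:
  "sets (obs_law d n \<tau> \<theta> \<Delta>) = sets (PiM ({1..d} \<times> {1..n}) (\<lambda>_. lborel))"
  unfolding obs_law_def by (intro sets_PiM_cong) (auto simp: split_beta)

lemma prob_space_obs_law: "prob_space (obs_law d n \<tau> \<theta> \<Delta>)"
  unfolding obs_law_def
  by (intro prob_space_PiM) (auto simp: split_beta prob_space_normal_density)

lemma Zstat_measurable:
  "Zstat d n \<in> measurable (PiM ({1..d} \<times> {1..n}) (\<lambda>_. lborel)) (PiM ({1..d} \<times> {1..n - 1}) (\<lambda>_. lborel))"
  unfolding Zstat_def
proof (rule measurable_restrict)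
  fix k assume "k \<in> {1..d} \<times> {1..n - 1}"
  then obtain j s where k: "k = (j, s)" "j \<in> {1..d}" "s \<le> n - 1" by auto
  have comp: "(\<lambda>x. x (j, i)) \<in> borel_measurable (PiM ({1..d} \<times> {1..n}) (\<lambda>_. lborel))"
    if "i \<in> {1..n}" for i
    using measurable_component_singleton[of "(j, i)" "{1..d} \<times> {1..n}" "\<lambda>_. lborel"] k that by simp
  show "(\<lambda>x. case k of (j, s) \<Rightarrow> sqrt (real s * real (n - s) / real n) *
          ((\<Sum>i=1..s. x (j, i)) / real s - (\<Sum>i=s+1..n. x (j, i)) / real (n - s)))
        \<in> measurable (PiM ({1..d} \<times> {1..n}) (\<lambda>_. lborel)) lborel"
    unfolding k(1) prod.case measurable_lborel1 using k
    by (intro borel_measurable_times borel_measurable_diff borel_measurable_divide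
          borel_measurable_sum borel_measurable_const comp) auto
qed

lemma obs_law_translate:
  "obs_law d n \<tau> (\<lambda>j. \<theta> j + c j) \<Delta>
     = distr (obs_law d n \<tau> \<theta> \<Delta>) (obs_law d n \<tau> (\<lambda>j. \<theta> j + c j) \<Delta>) (\<lambda>x. \<lambda>k\<in>{1..d} \<times> {1..n}. x k + c (fst k))"
proof -
  define M where "M \<theta>' = (\<lambda>(j, i). density lborel (normal_density (\<theta>' j + (if \<tau> < i then \<Delta> j else 0)) 1))"
    for \<theta>' :: "nat \<Rightarrow> real"
  let ?I = "{1..d} \<times> {1..n}" and ?\<theta>' = "\<lambda>j. \<theta> j + c j"
  have obs: "obs_law d n \<tau> \<theta>' \<Delta> = PiM ?I (M \<theta>')" for \<theta>'
    by (simp add: obs_law_def M_def)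
  have M: "prob_space (M \<theta>' k)" "sets (M \<theta>' k) = sets lborel" for \<theta>' k
    by (auto simp: M_def split_beta prob_space_normal_density)
  have "distr (PiM ?I (M \<theta>)) (PiM ?I (M ?\<theta>')) (\<lambda>x. \<lambda>k\<in>?I. x k + c (fst k))
      = PiM ?I (\<lambda>k. distr (M \<theta> k) (M ?\<theta>' k) (\<lambda>y. y + c (fst k)))"
    by (rule distr_PiM_componentwise[where f = "\<lambda>k y. y + c (fst k)"])
       (simp_all add: M translate_measurable measurable_cong_sets[OF M(2) M(2)])
  also have "\<dots> = PiM ?I (M ?\<theta>')"
  proof (intro PiM_cong refl)
    fix k :: "nat \<times> nat"
    have "distr (M \<theta> k) (M ?\<theta>' k) (\<lambda>y. y + c (fst k)) = distr (M \<theta> k) lborel (\<lambda>y. y + c (fst k))"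
      by (intro distr_cong) (simp_all add: M)
    also have "\<dots> = M ?\<theta>' k"
      by (simp add: M_def split_beta distr_normal_density_translate algebra_simps)
    finally show "distr (M \<theta> k) (M ?\<theta>' k) (\<lambda>y. y + c (fst k)) = M ?\<theta>' k" .
  qed
  finally show ?thesis unfolding obs ..
qed

lemma Zstat_translate:
  "Zstat d n (\<lambda>k\<in>{1..d} \<times> {1..n}. x k + c (fst k)) = Zstat d n x"
  unfolding Zstat_def
proof (intro restrict_ext)
  fix k assume "k \<in> {1..d} \<times> {1..n - 1}"
  then obtain j s where k: "k = (j, s)" "j \<in> {1..d}" "1 \<le> s" "s < n" by force
  let ?y = "\<lambda>k\<in>{1..d} \<times> {1..n}. x k + c (fst k)"
  have "(\<Sum>i=1..s. ?y (j, i)) = (\<Sum>i=1..s. x (j, i) + c j)"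
    using k by (intro sum.cong) auto
  hence left: "(\<Sum>i=1..s. ?y (j, i)) = (\<Sum>i=1..s. x (j, i)) + real s * c j"
    by (simp add: sum.distrib)
  have "(\<Sum>i=s+1..n. ?y (j, i)) = (\<Sum>i=s+1..n. x (j, i) + c j)"
    using k by (intro sum.cong) auto
  hence right: "(\<Sum>i=s+1..n. ?y (j, i)) = (\<Sum>i=s+1..n. x (j, i)) + real (n - s) * c j"
    using k by (simp add: sum.distrib)
  have "real s > 0" "real (n - s) > 0" using k by auto
  then show "(case k of (j, s) \<Rightarrow> sqrt (real s * real (n - s) / real n) *
          ((\<Sum>i=1..s. ?y (j, i)) / real s - (\<Sum>i=s+1..n. ?y (j, i)) / real (n - s)))
      = (case k of (j, s) \<Rightarrow> sqrt (real s * real (n - s) / real n) *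
          ((\<Sum>i=1..s. x (j, i)) / real s - (\<Sum>i=s+1..n. x (j, i)) / real (n - s)))"
    unfolding k(1) prod.case left right by (simp add: field_simps)
qed

lemma Z_law_translate: "Z_law d n \<tau> (\<lambda>j. \<theta> j + c j) \<Delta> = Z_law d n \<tau> \<theta> \<Delta>"
proof -
  let ?T = "\<lambda>x. \<lambda>k\<in>{1..d} \<times> {1..n}. x k + c (fst k)"
  let ?Zs = "PiM ({1..d} \<times> {1..n - 1}) (\<lambda>_. lborel)"
  have T: "?T \<in> measurable (obs_law d n \<tau> \<theta> \<Delta>) (obs_law d n \<tau> (\<lambda>j. \<theta> j + c j) \<Delta>)"
    unfolding obs_law_def by (rule translate_measurable) (simp_all add: split_beta)
  have Z: "Zstat d n \<in> measurable (obs_law d n \<tau> (\<lambda>j. \<theta> j + c j) \<Delta>) ?Zs"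
    using Zstat_measurable by (simp add: measurable_cong_sets[OF sets_obs_law refl])
  have "Z_law d n \<tau> (\<lambda>j. \<theta> j + c j) \<Delta>
      = distr (distr (obs_law d n \<tau> \<theta> \<Delta>) (obs_law d n \<tau> (\<lambda>j. \<theta> j + c j) \<Delta>) ?T) ?Zs (Zstat d n)"
    unfolding Z_law_def by (subst obs_law_translate) (rule refl)
  also have "\<dots> = distr (obs_law d n \<tau> \<theta> \<Delta>) ?Zs (Zstat d n \<circ> ?T)"
    by (rule distr_distr[OF Z T])
  also have "Zstat d n \<circ> ?T = Zstat d n"
    by (rule ext) (simp only: comp_def Zstat_translate)
  finally show ?thesis unfolding Z_law_def .
qed

lemma Z_lr_measurable:
  assumes "1 \<le> \<tau>" "\<tau> < n"
  shows "Z_lr d n \<tau> \<Delta> \<in> borel_measurable (PiM ({1..d} \<times> {1..n - 1}) (\<lambda>_. lborel))"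
proof -
  have "(\<lambda>z. z (j, \<tau>)) \<in> borel_measurable (PiM ({1..d} \<times> {1..n - 1}) (\<lambda>_. lborel))"
    if "j \<in> {1..d}" for j
    using measurable_component_singleton[of "(j, \<tau>)" "{1..d} \<times> {1..n - 1}" "\<lambda>_. lborel"] that assms
    by simp
  hence "(\<lambda>z. \<Sum>j\<in>{1..d}. \<Delta> j * z (j, \<tau>)) \<in> borel_measurable (PiM ({1..d} \<times> {1..n - 1}) (\<lambda>_. lborel))"
    by (intro borel_measurable_sum borel_measurable_times borel_measurable_const)
  thus ?thesis unfolding Z_lr_def by simp
qed

text \<open>The mean \<open>\<theta>\<^sub>j - (n - \<tau>)/n \<Delta>\<^sub>j + \<Delta>\<^sub>j 1{\<tau> < i}\<close> equals
  \<open>\<theta>\<^sub>j + \<Delta>\<^sub>j w\<^sub>i\<close>, whose likelihood ratio against \<open>\<theta>\<close> is a function of the statistic.\<close>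

lemma obs_law_eq_density:
  assumes "1 \<le> \<tau>" "\<tau> < n"
  shows "obs_law d n \<tau> (\<lambda>j. \<theta> j - real (n - \<tau>) / real n * \<Delta> j) \<Delta>
       = density (obs_law d n \<tau> \<theta> (\<lambda>_. 0)) (\<lambda>x. Z_lr d n \<tau> \<Delta> (Zstat d n x))"
proof -
  let ?I = "{1..d} \<times> {1..n}"
  define N where "N = (\<lambda>(j, i::nat). density lborel (normal_density (\<theta> j) 1))"
  define g where "g = (\<lambda>(j, i) y. ennreal (exp (\<Delta> j * cusum_weight n \<tau> i * (y - \<theta> j)
                                                 - (\<Delta> j * cusum_weight n \<tau> i)\<^sup>2 / 2)))"
  have N: "prob_space (N k)" for k
    by (simp add: N_def split_beta prob_space_normal_density)
  have null: "obs_law d n \<tau> \<theta> (\<lambda>_. 0) = PiM ?I N"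
    by (simp add: obs_law_def N_def)
  have component: "(\<lambda>(j, i). density lborel (normal_density (\<theta> j - real (n - \<tau>) / real n * \<Delta> j
                     + (if \<tau> < i then \<Delta> j else 0)) 1)) = (\<lambda>k. density (N k) (g k))"
  proof
    fix k :: "nat \<times> nat"
    obtain j i where k: "k = (j, i)" by (cases k)
    have "density (N k) (g k) = density lborel (\<lambda>y. ennreal (normal_density (\<theta> j) 1 y)
        * ennreal (exp (\<Delta> j * cusum_weight n \<tau> i * (y - \<theta> j) - (\<Delta> j * cusum_weight n \<tau> i)\<^sup>2 / 2)))"
      by (simp add: k N_def g_def density_density_eq)
    also have "\<dots> = density lborel (normal_density (\<theta> j + \<Delta> j * cusum_weight n \<tau> i) 1)"
      by (intro density_cong)
         (auto simp: ennreal_mult'[symmetric] normal_density_shift_ratio[of "\<theta> j + \<Delta> j * cusum_weight n \<tau> i" _ "\<theta> j"])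
    also have "\<theta> j + \<Delta> j * cusum_weight n \<tau> i = \<theta> j - real (n - \<tau>) / real n * \<Delta> j + (if \<tau> < i then \<Delta> j else 0)"
      by (simp add: cusum_weight_def algebra_simps)
    finally show "(\<lambda>(j, i). density lborel (normal_density (\<theta> j - real (n - \<tau>) / real n * \<Delta> j
                     + (if \<tau> < i then \<Delta> j else 0)) 1)) k = density (N k) (g k)"
      by (simp add: k)
  qed
  have "obs_law d n \<tau> (\<lambda>j. \<theta> j - real (n - \<tau>) / real n * \<Delta> j) \<Delta> = PiM ?I (\<lambda>k. density (N k) (g k))"
    unfolding obs_law_def component ..
  also have "\<dots> = density (PiM ?I N) (\<lambda>x. \<Prod>k\<in>?I. g k (x k))"
  proof (rule PiM_density)
    fix k
    show "g k \<in> borel_measurable (N k)" by (simp add: g_def N_def split_beta)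
    show "prob_space (density (N k) (g k))"
      unfolding fun_cong[OF component, of k, symmetric] by (simp add: split_beta prob_space_normal_density)
  qed (simp_all add: N)
  also have "\<dots> = density (obs_law d n \<tau> \<theta> (\<lambda>_. 0)) (\<lambda>x. Z_lr d n \<tau> \<Delta> (Zstat d n x))"
    unfolding null g_def using prod_obs_lr_eq_Z_lr[OF assms] by (simp add: case_prod_beta')
  finally show ?thesis .
qed

lemma Zstat_measurable_obs_law:
  "Zstat d n \<in> measurable (obs_law d n \<tau> \<theta> \<Delta>) (PiM ({1..d} \<times> {1..n - 1}) (\<lambda>_. lborel))"
  using Zstat_measurable by (simp add: measurable_cong_sets[OF sets_obs_law refl])

lemma prob_space_Z_law: "prob_space (Z_law d n \<tau> \<theta> \<Delta>)"
  unfolding Z_law_def by (intro prob_space.prob_space_distr prob_space_obs_law Zstat_measurable_obs_law)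

lemma sets_Z_law: "sets (Z_law d n \<tau> \<theta> \<Delta>) = sets (PiM ({1..d} \<times> {1..n - 1}) (\<lambda>_. lborel))"
  by (simp add: Z_law_def)

lemma Z_law_eq_density:
  assumes "1 \<le> \<tau>" "\<tau> < n"
  shows "Z_law d n \<tau> \<theta> \<Delta> = density (null_law d n \<tau> \<theta>) (Z_lr d n \<tau> \<Delta>)"
proof -
  let ?\<theta>\<^sub>0 = "\<lambda>j. \<theta> j - real (n - \<tau>) / real n * \<Delta> j"
  have "Z_law d n \<tau> \<theta> \<Delta> = Z_law d n \<tau> ?\<theta>\<^sub>0 \<Delta>"
    using Z_law_translate[of d n \<tau> ?\<theta>\<^sub>0 "\<lambda>j. real (n - \<tau>) / real n * \<Delta> j" \<Delta>] by simp
  also have "\<dots> = distr (density (obs_law d n \<tau> \<theta> (\<lambda>_. 0)) (\<lambda>x. Z_lr d n \<tau> \<Delta> (Zstat d n x)))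
                     (PiM ({1..d} \<times> {1..n - 1}) (\<lambda>_. lborel)) (Zstat d n)"
    unfolding Z_law_def obs_law_eq_density[OF assms] ..
  also have "\<dots> = density (null_law d n \<tau> \<theta>) (Z_lr d n \<tau> \<Delta>)"
    unfolding null_law_def Z_law_def
    by (rule density_distr[symmetric, OF Z_lr_measurable[OF assms] Zstat_measurable_obs_law])
  finally show ?thesis .
qed

lemma Z_lr_measurable_null_law:
  assumes "1 \<le> \<tau>" "\<tau> < n"
  shows "Z_lr d n \<tau> \<Delta> \<in> borel_measurable (null_law d n \<tau> \<theta>)"
  unfolding null_law_def Z_law_def using Z_lr_measurable[OF assms] by simp

lemma nn_integral_Z_lr:
  assumes "1 \<le> \<tau>" "\<tau> < n"
  shows "(\<integral>\<^sup>+z. Z_lr d n \<tau> \<Delta> z \<partial>null_law d n \<tau> \<theta>) = 1"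
proof -
  have "space (Z_law d n \<tau> \<theta> \<Delta>) = space (null_law d n \<tau> \<theta>)"
    by (intro sets_eq_imp_space_eq) (simp add: null_law_def sets_Z_law)
  hence "1 = emeasure (Z_law d n \<tau> \<theta> \<Delta>) (space (null_law d n \<tau> \<theta>))"
    using prob_space.emeasure_space_1[OF prob_space_Z_law[of d n \<tau> \<theta> \<Delta>]] by simp
  also have "\<dots> = emeasure (density (null_law d n \<tau> \<theta>) (Z_lr d n \<tau> \<Delta>)) (space (null_law d n \<tau> \<theta>))"
    by (simp only: Z_law_eq_density[OF assms])
  also have "\<dots> = (\<integral>\<^sup>+z. Z_lr d n \<tau> \<Delta> z \<partial>null_law d n \<tau> \<theta>)"
    by (subst emeasure_density[OF Z_lr_measurable_null_law[OF assms]]) (auto intro!: nn_integral_cong)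
  finally show ?thesis ..
qed

lemma Z_lr_mult:
  "Z_lr d n \<tau> \<Delta> z * Z_lr d n \<tau> \<Delta>' z
     = Z_lr d n \<tau> (\<lambda>j. \<Delta> j + \<Delta>' j) z * ennreal (exp (cusum_scale n \<tau> * (\<Sum>j\<in>{1..d}. \<Delta> j * \<Delta>' j)))"
proof -
  let ?h = "cusum_scale n \<tau>"
  have "(- sqrt ?h * (\<Sum>j\<in>{1..d}. \<Delta> j * z (j, \<tau>)) - ?h * (\<Sum>j\<in>{1..d}. (\<Delta> j)\<^sup>2) / 2)
      + (- sqrt ?h * (\<Sum>j\<in>{1..d}. \<Delta>' j * z (j, \<tau>)) - ?h * (\<Sum>j\<in>{1..d}. (\<Delta>' j)\<^sup>2) / 2)
      = (- sqrt ?h * (\<Sum>j\<in>{1..d}. (\<Delta> j + \<Delta>' j) * z (j, \<tau>)) - ?h * (\<Sum>j\<in>{1..d}. (\<Delta> j + \<Delta>' j)\<^sup>2) / 2)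
      + ?h * (\<Sum>j\<in>{1..d}. \<Delta> j * \<Delta>' j)"
    by (simp add: power2_eq_square algebra_simps sum.distrib sum_distrib_left sum_divide_distrib sum_subtractf)
  thus ?thesis
    unfolding Z_lr_def by (simp add: ennreal_mult'[symmetric] mult_exp_exp)
qed

section \<open>The Rademacher mixture and its second moment\<close>

definition rad_support :: "nat \<Rightarrow> nat \<Rightarrow> (nat set \<times> (nat \<Rightarrow> real)) set" where
  "rad_support d p = {(m, \<epsilon>). m \<subseteq> {1..d} \<and> card m = p \<and> \<epsilon> \<in> PiE m (\<lambda>_. {-1, 1})}"

definition rad_sign :: "nat set \<times> (nat \<Rightarrow> real) \<Rightarrow> nat \<Rightarrow> real" where
  "rad_sign w j = (if j \<in> fst w then snd w j else 0)"

definition rad_shift :: "nat \<Rightarrow> real \<Rightarrow> nat set \<times> (nat \<Rightarrow> real) \<Rightarrow> nat \<Rightarrow> real" where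
  "rad_shift p r w j = r / sqrt (real p) * rad_sign w j"

definition rad_overlap :: "nat \<Rightarrow> nat set \<times> (nat \<Rightarrow> real) \<Rightarrow> nat set \<times> (nat \<Rightarrow> real) \<Rightarrow> real" where
  "rad_overlap d w w' = (\<Sum>j\<in>{1..d}. rad_sign w j * rad_sign w' j)"

definition rad_overlap_mgf :: "nat \<Rightarrow> nat \<Rightarrow> real \<Rightarrow> real" where
  "rad_overlap_mgf d p a =
     (\<Sum>w\<in>rad_support d p. \<Sum>w'\<in>rad_support d p. exp (a * rad_overlap d w w')) / (real (card (rad_support d p)))\<^sup>2"

lemma rad_prior_eq_map_pmf: "rad_prior d p r = map_pmf (rad_shift p r) (pmf_of_set (rad_support d p))"
proof -
  have "(\<lambda>(m, \<epsilon>). \<lambda>j. if j \<in> m then r / sqrt (real p) * \<epsilon> j else 0) = rad_shift p r"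
    by (auto simp: rad_shift_def rad_sign_def fun_eq_iff)
  thus ?thesis unfolding rad_prior_def rad_support_def by simp
qed

lemma finite_rad_support: "finite (rad_support d p)"
proof (rule finite_subset)
  show "rad_support d p \<subseteq> (SIGMA m:Pow {1..d}. PiE m (\<lambda>_. {-1, 1}))"
    by (auto simp: rad_support_def)
  show "finite (SIGMA m:Pow {1..d}. PiE m (\<lambda>_. {-1, 1::real}))"
    by (intro finite_SigmaI finite_PiE) (auto intro: finite_subset)
qed

lemma rad_support_nonempty:
  assumes "p \<le> d"
  shows "rad_support d p \<noteq> {}"
proof -
  have "({1..p}, \<lambda>j\<in>{1..p}. 1) \<in> rad_support d p" using assms by (auto simp: rad_support_def)
  thus ?thesis by auto
qed

lemma mix_law_eq_density:
  assumes "1 \<le> \<tau>" "\<tau> < n" "p \<le> d"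
  shows "mix_law d n \<tau> \<theta> p r = density (null_law d n \<tau> \<theta>)
           (\<lambda>z. (\<Sum>w\<in>rad_support d p. Z_lr d n \<tau> (rad_shift p r w) z) / of_nat (card (rad_support d p)))"
    (is "_ = density ?N ?L")
proof (rule measure_eqI)
  let ?S = "rad_support d p"
  have sets_mix: "sets (mix_law d n \<tau> \<theta> p r) = sets ?N"
    unfolding mix_law_def by (rule sets_bind) (simp_all add: null_law_def sets_Z_law)
  thus "sets (mix_law d n \<tau> \<theta> p r) = sets (density ?N ?L)" by simp
  fix A assume "A \<in> sets (mix_law d n \<tau> \<theta> p r)"
  hence A: "A \<in> sets ?N" using sets_mix by simp
  have kernel: "(\<lambda>\<Delta>. Z_law d n \<tau> \<theta> \<Delta>) \<in> measurable (measure_pmf (rad_prior d p r)) (subprob_algebra ?N)"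
    by (auto simp: space_subprob_algebra null_law_def sets_Z_law
             intro!: prob_space_imp_subprob_space prob_space_Z_law)
  note lr_meas = Z_lr_measurable_null_law[OF assms(1,2)]
  have "emeasure (mix_law d n \<tau> \<theta> p r) A = (\<integral>\<^sup>+\<Delta>. emeasure (Z_law d n \<tau> \<theta> \<Delta>) A \<partial>measure_pmf (rad_prior d p r))"
    unfolding mix_law_def by (rule emeasure_bind[OF _ kernel A]) simp
  also have "\<dots> = (\<Sum>w\<in>?S. emeasure (Z_law d n \<tau> \<theta> (rad_shift p r w)) A) / of_nat (card ?S)"
    unfolding rad_prior_eq_map_pmf
    by (simp add: nn_integral_pmf_of_set rad_support_nonempty[OF assms(3)] finite_rad_support)
  also have "\<dots> = (\<integral>\<^sup>+z. (\<Sum>w\<in>?S. Z_lr d n \<tau> (rad_shift p r w) z * indicator A z) \<partial>?N) / of_nat (card ?S)"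
    using A lr_meas by (simp add: Z_law_eq_density[OF assms(1,2)] emeasure_density nn_integral_sum)
  also have "\<dots> = (\<integral>\<^sup>+z. ?L z * indicator A z \<partial>?N)"
    using A lr_meas
    by (subst nn_integral_divide[symmetric])
       (auto intro!: nn_integral_cong simp: sum_distrib_right sum_distrib_left ennreal_times_divide mult.commute)
  also have "\<dots> = emeasure (density ?N ?L) A"
    using A lr_meas by (subst emeasure_density) auto
  finally show "emeasure (mix_law d n \<tau> \<theta> p r) A = emeasure (density ?N ?L) A" .
qed

lemma cusum_scale_rad_shift_inner:
  "cusum_scale n \<tau> * (\<Sum>j\<in>{1..d}. rad_shift p r w j * rad_shift p r w' j)
     = cusum_scale n \<tau> * r\<^sup>2 / real p * rad_overlap d w w'"
proof -
  have "(r / sqrt (real p))\<^sup>2 = r\<^sup>2 / real p" by (simp add: power_divide)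
  thus ?thesis
    by (simp add: rad_shift_def rad_overlap_def sum_distrib_left power2_eq_square algebra_simps)
qed

lemma chi2_moment_eq_rad_overlap_mgf:
  assumes "1 \<le> \<tau>" "\<tau> < n" "p \<le> d"
  shows "chi2_moment d n \<tau> \<theta> p r = ennreal (rad_overlap_mgf d p (cusum_scale n \<tau> * r\<^sup>2 / real p))"
proof -
  let ?S = "rad_support d p" and ?N = "null_law d n \<tau> \<theta>" and ?a = "cusum_scale n \<tau> * r\<^sup>2 / real p"
  let ?c = "of_nat (card ?S) :: ennreal"
  let ?L = "\<lambda>z. (\<Sum>w\<in>?S. Z_lr d n \<tau> (rad_shift p r w) z) / ?c"
  interpret N: prob_space ?N
    unfolding null_law_def by (rule prob_space_Z_law)
  note lr_meas = Z_lr_measurable_null_law[OF assms(1,2)]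
  have "card ?S > 0"
    using rad_support_nonempty[OF assms(3)] finite_rad_support by (simp add: card_gt_0_iff)
  have "AE z in ?N. ?L z = lik_ratio d n \<tau> \<theta> p r z"
    unfolding lik_ratio_def mix_law_eq_density[OF assms]
    by (rule N.RN_deriv_unique[OF _ refl]) (use lr_meas in simp)
  hence "chi2_moment d n \<tau> \<theta> p r = (\<integral>\<^sup>+z. (?L z)\<^sup>2 \<partial>?N)"
    unfolding chi2_moment_def by (intro nn_integral_cong_AE) auto
  also have "\<dots> = (\<integral>\<^sup>+z. (\<Sum>w\<in>?S. \<Sum>w'\<in>?S. Z_lr d n \<tau> (\<lambda>j. rad_shift p r w j + rad_shift p r w' j) z
                         * ennreal (exp (?a * rad_overlap d w w'))) / ?c\<^sup>2 \<partial>?N)"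
  proof (rule nn_integral_cong)
    fix z
    have "(?L z)\<^sup>2 = (\<Sum>w\<in>?S. Z_lr d n \<tau> (rad_shift p r w) z)\<^sup>2 / ?c\<^sup>2"
      by (simp add: power_divide_distrib_ennreal)
    also have "(\<Sum>w\<in>?S. Z_lr d n \<tau> (rad_shift p r w) z)\<^sup>2
        = (\<Sum>w\<in>?S. \<Sum>w'\<in>?S. Z_lr d n \<tau> (rad_shift p r w) z * Z_lr d n \<tau> (rad_shift p r w') z)"
      by (simp add: power2_eq_square sum_product)
    finally show "(?L z)\<^sup>2 = (\<Sum>w\<in>?S. \<Sum>w'\<in>?S. Z_lr d n \<tau> (\<lambda>j. rad_shift p r w j + rad_shift p r w' j) z
                         * ennreal (exp (?a * rad_overlap d w w'))) / ?c\<^sup>2"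
      by (simp only: Z_lr_mult cusum_scale_rad_shift_inner)
  qed
  also have "\<dots> = (\<Sum>w\<in>?S. \<Sum>w'\<in>?S. ennreal (exp (?a * rad_overlap d w w'))) / ?c\<^sup>2"
    using lr_meas
    by (simp add: nn_integral_divide nn_integral_sum nn_integral_multc nn_integral_Z_lr[OF assms(1,2)])
  also have "\<dots> = ennreal (\<Sum>w\<in>?S. \<Sum>w'\<in>?S. exp (?a * rad_overlap d w w')) / ennreal ((real (card ?S))\<^sup>2)"
    by (simp add: sum_ennreal sum_nonneg ennreal_of_nat_eq_real_of_nat ennreal_power)
  also have "\<dots> = ennreal (rad_overlap_mgf d p ?a)"
    unfolding rad_overlap_mgf_def using \<open>card ?S > 0\<close> by (intro divide_ennreal) (auto intro!: sum_nonneg)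
  finally show ?thesis .
qed

section \<open>Overlap of two random supports\<close>

definition ksubsets :: "nat \<Rightarrow> nat \<Rightarrow> nat set set" where
  "ksubsets d p = {m. m \<subseteq> {1..d} \<and> card m = p}"

lemma finite_ksubsets: "finite (ksubsets d p)"
  unfolding ksubsets_def by (rule finite_subset[of _ "Pow {1..d}"]) auto

lemma card_ksubsets: "card (ksubsets d p) = d choose p"
  unfolding ksubsets_def using n_subsets[of "{1..d}" p] by simp

lemma card_ksubsets_superset_le:
  assumes "T \<subseteq> {1..d}" "card T \<le> p"
  shows "card {m\<in>ksubsets d p. T \<subseteq> m} \<le> (d - card T) choose (p - card T)"
proof -
  have "finite T" using assms(1) by (rule finite_subset) simp
  have "{m\<in>ksubsets d p. T \<subseteq> m} \<subseteq> (\<lambda>B. B \<union> T) ` {B. B \<subseteq> {1..d} - T \<and> card B = p - card T}"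
  proof
    fix m assume "m \<in> {m\<in>ksubsets d p. T \<subseteq> m}"
    hence m: "m \<subseteq> {1..d}" "card m = p" "T \<subseteq> m" by (auto simp: ksubsets_def)
    hence "card (m - T) = p - card T" using \<open>finite T\<close> by (simp add: card_Diff_subset)
    moreover have "m = (m - T) \<union> T" using m by auto
    ultimately show "m \<in> (\<lambda>B. B \<union> T) ` {B. B \<subseteq> {1..d} - T \<and> card B = p - card T}"
      using m by blast
  qed
  hence "card {m\<in>ksubsets d p. T \<subseteq> m} \<le> card ((\<lambda>B. B \<union> T) ` {B. B \<subseteq> {1..d} - T \<and> card B = p - card T})"
    by (rule card_mono[rotated]) (auto intro: finite_subset[of _ "Pow {1..d}"])
  also have "\<dots> \<le> card {B. B \<subseteq> {1..d} - T \<and> card B = p - card T}"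
    by (rule card_image_le) (auto intro: finite_subset[of _ "Pow {1..d}"])
  also have "\<dots> = (d - card T) choose (p - card T)"
    using n_subsets[of "{1..d} - T" "p - card T"] assms \<open>finite T\<close> by (simp add: card_Diff_subset)
  finally show ?thesis .
qed

lemma binomial_diff_mult_power_le:
  assumes "k \<le> p" "p \<le> d"
  shows "real ((d - k) choose (p - k)) * real d ^ k \<le> real p ^ k * real (d choose p)"
  using assms
proof (induction k)
  case 0 thus ?case by simp
next
  case (Suc k)
  hence k: "k < p" "k < d" by auto
  define A where "A = real ((d - k) choose (p - k))"
  define B where "B = real ((d - Suc k) choose (p - Suc k))"
  have pascal: "real (d - k) * B = A * real (p - k)"
  proof -
    have "Suc (d - Suc k) * ((d - Suc k) choose (p - Suc k)) = (Suc (d - Suc k) choose Suc (p - Suc k)) * Suc (p - Suc k)"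
      by (rule Suc_times_binomial_eq)
    moreover have "Suc (d - Suc k) = d - k" "Suc (p - Suc k) = p - k" using k by auto
    ultimately show ?thesis unfolding A_def B_def by (metis of_nat_mult)
  qed
  have le: "real d * real (p - k) \<le> real p * real (d - k)"
    using k Suc.prems mult_left_mono[of "real p" "real d" "real k"] by (simp add: of_nat_diff algebra_simps)
  have "real (d - k) * (real d * B) = real d * (real (d - k) * B)" by (simp only: ac_simps)
  also have "\<dots> = A * (real d * real (p - k))" unfolding pascal by (simp only: ac_simps)
  also have "\<dots> \<le> A * (real p * real (d - k))" by (rule mult_left_mono[OF le]) (simp add: A_def)
  also have "\<dots> = real (d - k) * (real p * A)" by (simp only: ac_simps)
  finally have "real d * B \<le> real p * A" using k by simp
  hence "(real d * B) * real d ^ k \<le> (real p * A) * real d ^ k" by (rule mult_right_mono) simp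
  also have "\<dots> = (A * real d ^ k) * real p" by (simp only: ac_simps)
  also have "\<dots> \<le> (real p ^ k * real (d choose p)) * real p"
    using Suc by (intro mult_right_mono) (simp_all add: A_def)
  finally show ?case by (simp add: B_def algebra_simps)
qed

lemma sum_Pow_power_card:
  fixes t :: real
  assumes "finite A"
  shows "(\<Sum>T\<in>Pow A. t ^ card T) = (1 + t) ^ card A"
proof -
  have "(1 + t) ^ card A = (\<Prod>j\<in>A. t + 1)" by (simp add: add.commute)
  also have "\<dots> = (\<Sum>T\<in>Pow A. (\<Prod>j\<in>T. t) * (\<Prod>j\<in>A - T. 1))"
    by (rule prod_add[OF assms])
  also have "\<dots> = (\<Sum>T\<in>Pow A. t ^ card T)" by simp
  finally show ?thesis ..
qed

text \<open>For uniform m' the overlap \<open>|m \<inter> m'|\<close> is hypergeometric; its generating function is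
  dominated by that of \<open>Binomial(p, p/d)\<close>.\<close>

lemma sum_ksubsets_power_card_Int_le:
  fixes t :: real
  assumes m: "m \<in> ksubsets d p" and "t \<ge> 0" "1 \<le> p" "p \<le> d"
  shows "(\<Sum>m'\<in>ksubsets d p. (1 + t) ^ card (m \<inter> m')) \<le> real (d choose p) * (1 + t * p / d) ^ p"
proof -
  have "finite m" "m \<subseteq> {1..d}" "card m = p"
    using m by (auto simp: ksubsets_def intro: finite_subset)
  have expand: "(1 + t) ^ card (m \<inter> m') = (\<Sum>T\<in>Pow m. if T \<subseteq> m' then t ^ card T else 0)" for m'
  proof -
    have "Pow (m \<inter> m') = {T\<in>Pow m. T \<subseteq> m'}" by auto
    thus ?thesis
      using sum_Pow_power_card[of "m \<inter> m'" t] \<open>finite m\<close>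
      by (simp add: sum.inter_filter[symmetric])
  qed
  have count: "t ^ card T * real (card {m'\<in>ksubsets d p. T \<subseteq> m'}) \<le> (t * p / d) ^ card T * real (d choose p)"
    if "T \<in> Pow m" for T
  proof -
    have "card T \<le> p" using that \<open>finite m\<close> \<open>card m = p\<close> by (metis PowD card_mono)
    have "real (card {m'\<in>ksubsets d p. T \<subseteq> m'}) \<le> real ((d - card T) choose (p - card T))"
      using card_ksubsets_superset_le[of T d p] that \<open>m \<subseteq> {1..d}\<close> \<open>card T \<le> p\<close> by auto
    also have "\<dots> \<le> real p ^ card T * real (d choose p) / real d ^ card T"
      using binomial_diff_mult_power_le[OF \<open>card T \<le> p\<close> \<open>p \<le> d\<close>] \<open>1 \<le> p\<close> \<open>p \<le> d\<close>
      by (simp add: field_simps)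
    finally have "t ^ card T * real (card {m'\<in>ksubsets d p. T \<subseteq> m'})
        \<le> t ^ card T * (real p ^ card T * real (d choose p) / real d ^ card T)"
      using \<open>t \<ge> 0\<close> by (intro mult_left_mono) auto
    also have "\<dots> = (t * p / d) ^ card T * real (d choose p)"
      by (simp add: power_mult_distrib power_divide)
    finally show ?thesis .
  qed
  have "(\<Sum>m'\<in>ksubsets d p. (1 + t) ^ card (m \<inter> m'))
      = (\<Sum>m'\<in>ksubsets d p. \<Sum>T\<in>Pow m. if T \<subseteq> m' then t ^ card T else 0)"
    by (simp only: expand)
  also have "\<dots> = (\<Sum>T\<in>Pow m. \<Sum>m'\<in>ksubsets d p. if T \<subseteq> m' then t ^ card T else 0)"
    by (rule sum.swap)
  also have "\<dots> = (\<Sum>T\<in>Pow m. t ^ card T * real (card {m'\<in>ksubsets d p. T \<subseteq> m'}))"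
    by (intro sum.cong refl) (simp add: sum.inter_filter[OF finite_ksubsets, symmetric])
  also have "\<dots> \<le> (\<Sum>T\<in>Pow m. (t * p / d) ^ card T * real (d choose p))"
    by (rule sum_mono) (rule count)
  also have "\<dots> = real (d choose p) * (1 + t * p / d) ^ p"
    using sum_Pow_power_card[OF \<open>finite m\<close>, of "t * p / d"] \<open>card m = p\<close>
    by (simp add: sum_distrib_left[symmetric] mult.commute)
  finally show ?thesis .
qed

lemma rad_support_eq_Sigma: "rad_support d p = Sigma (ksubsets d p) (\<lambda>m. PiE m (\<lambda>_. {-1, 1}))"
  by (auto simp: rad_support_def ksubsets_def)

lemma card_rad_support: "card (rad_support d p) = (d choose p) * 2 ^ p"
proof -
  have "card (rad_support d p) = (\<Sum>m\<in>ksubsets d p. card (PiE m (\<lambda>_. {-1, 1::real})))"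
    unfolding rad_support_eq_Sigma
    by (rule card_SigmaI[OF finite_ksubsets]) (auto simp: ksubsets_def intro!: finite_PiE intro: finite_subset)
  also have "\<dots> = (\<Sum>m\<in>ksubsets d p. 2 ^ p)"
  proof (rule sum.cong[OF refl])
    fix m assume "m \<in> ksubsets d p"
    hence "finite m" "card m = p" by (auto simp: ksubsets_def intro: finite_subset)
    thus "card (PiE m (\<lambda>_. {-1, 1::real})) = 2 ^ p" by (simp add: card_PiE numeral_2_eq_2)
  qed
  finally show ?thesis by (simp add: card_ksubsets)
qed

lemma sum_PiE_signs_exp:
  fixes c :: "'a \<Rightarrow> real"
  assumes "finite A"
  shows "(\<Sum>\<epsilon>\<in>PiE A (\<lambda>_. {-1, 1}). exp (\<Sum>j\<in>A. c j * \<epsilon> j)) = (\<Prod>j\<in>A. 2 * cosh (c j))"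
proof -
  have "(\<Sum>\<epsilon>\<in>PiE A (\<lambda>_. {-1, 1}). exp (\<Sum>j\<in>A. c j * \<epsilon> j)) = (\<Sum>\<epsilon>\<in>PiE A (\<lambda>_. {-1, 1}). \<Prod>j\<in>A. exp (c j * \<epsilon> j))"
    by (simp add: exp_sum[OF assms])
  also have "\<dots> = (\<Prod>j\<in>A. \<Sum>e\<in>{-1, 1}. exp (c j * e))"
    by (rule prod_sum_PiE[symmetric]) (use assms in auto)
  also have "\<dots> = (\<Prod>j\<in>A. 2 * cosh (c j))"
    by (intro prod.cong refl) (simp add: cosh_field_def)
  finally show ?thesis .
qed

lemma sum_rad_support_exp_overlap_le:
  assumes w: "w \<in> rad_support d p" and "1 \<le> p" "p \<le> d"
  shows "(\<Sum>w'\<in>rad_support d p. exp (a * rad_overlap d w w'))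
       \<le> real (card (rad_support d p)) * (1 + (cosh a - 1) * p / d) ^ p"
proof -
  obtain m \<epsilon> where w_eq: "w = (m, \<epsilon>)" by (cases w)
  have m: "m \<in> ksubsets d p" and \<epsilon>: "\<epsilon> \<in> PiE m (\<lambda>_. {-1, 1})"
    using w unfolding w_eq rad_support_eq_Sigma by auto
  have cosh_sign: "cosh (a * rad_sign w j) = (if j \<in> m then 1 + (cosh a - 1) else 1)" for j
  proof (cases "j \<in> m")
    case True
    hence "\<epsilon> j = -1 \<or> \<epsilon> j = 1" using \<epsilon> by auto
    thus ?thesis using True by (auto simp: rad_sign_def w_eq)
  qed (simp add: rad_sign_def w_eq)
  have inner: "(\<Sum>\<epsilon>'\<in>PiE m' (\<lambda>_. {-1, 1}). exp (a * rad_overlap d w (m', \<epsilon>')))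
      = 2 ^ p * (1 + (cosh a - 1)) ^ card (m \<inter> m')" if m': "m' \<in> ksubsets d p" for m'
  proof -
    have "finite m'" "m' \<subseteq> {1..d}" "card m' = p"
      using m' by (auto simp: ksubsets_def intro: finite_subset)
    have "a * rad_overlap d w (m', \<epsilon>') = (\<Sum>j\<in>m'. (a * rad_sign w j) * \<epsilon>' j)"
      if "\<epsilon>' \<in> PiE m' (\<lambda>_. {-1, 1})" for \<epsilon>'
    proof -
      have "rad_overlap d w (m', \<epsilon>') = (\<Sum>j\<in>m'. rad_sign w j * rad_sign (m', \<epsilon>') j)"
        unfolding rad_overlap_def using \<open>m' \<subseteq> {1..d}\<close>
        by (intro sum.mono_neutral_right) (auto simp: rad_sign_def)
      thus ?thesis by (simp add: rad_sign_def sum_distrib_left mult.assoc)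
    qed
    hence "(\<Sum>\<epsilon>'\<in>PiE m' (\<lambda>_. {-1, 1}). exp (a * rad_overlap d w (m', \<epsilon>')))
        = (\<Prod>j\<in>m'. 2 * cosh (a * rad_sign w j))"
      by (simp add: sum_PiE_signs_exp[OF \<open>finite m'\<close>] cong: sum.cong)
    also have "\<dots> = 2 ^ p * (\<Prod>j\<in>m'. if j \<in> m then 1 + (cosh a - 1) else 1)"
      by (simp add: prod.distrib cosh_sign \<open>card m' = p\<close>)
    also have "(\<Prod>j\<in>m'. if j \<in> m then 1 + (cosh a - 1) else 1) = (1 + (cosh a - 1)) ^ card (m \<inter> m')"
      using \<open>finite m'\<close> by (simp add: prod.If_cases Int_commute)
    finally show ?thesis .
  qed
  have "(\<Sum>w'\<in>rad_support d p. exp (a * rad_overlap d w w'))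
      = (\<Sum>m'\<in>ksubsets d p. \<Sum>\<epsilon>'\<in>PiE m' (\<lambda>_. {-1, 1}). exp (a * rad_overlap d w (m', \<epsilon>')))"
    unfolding rad_support_eq_Sigma
    by (subst sum.Sigma) (auto simp: finite_ksubsets ksubsets_def intro!: finite_PiE intro: finite_subset)
  also have "\<dots> = (\<Sum>m'\<in>ksubsets d p. 2 ^ p * (1 + (cosh a - 1)) ^ card (m \<inter> m'))"
    by (intro sum.cong refl inner)
  also have "\<dots> \<le> 2 ^ p * (real (d choose p) * (1 + (cosh a - 1) * p / d) ^ p)"
  proof -
    have "(\<Sum>m'\<in>ksubsets d p. (1 + (cosh a - 1)) ^ card (m \<inter> m'))
        \<le> real (d choose p) * (1 + (cosh a - 1) * p / d) ^ p"
      by (rule sum_ksubsets_power_card_Int_le[OF m]) (use cosh_real_ge_1[of a] assms in auto)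
    thus ?thesis unfolding sum_distrib_left[symmetric] by (intro mult_left_mono) auto
  qed
  also have "\<dots> = real (card (rad_support d p)) * (1 + (cosh a - 1) * p / d) ^ p"
    by (simp add: card_rad_support)
  finally show ?thesis .
qed

lemma one_le_rad_overlap_mgf:
  assumes "a \<ge> 0" "p \<le> d"
  shows "1 \<le> rad_overlap_mgf d p a"
proof -
  let ?S = "rad_support d p"
  have "real (card ?S) > 0"
    using rad_support_nonempty[OF assms(2)] finite_rad_support by (simp add: card_gt_0_iff)
  have "(\<Sum>w\<in>?S. \<Sum>w'\<in>?S. rad_overlap d w w') = (\<Sum>j\<in>{1..d}. (\<Sum>w\<in>?S. rad_sign w j)\<^sup>2)"
  proof -
    have "(\<Sum>w\<in>?S. \<Sum>w'\<in>?S. rad_overlap d w w') = (\<Sum>w\<in>?S. \<Sum>j\<in>{1..d}. \<Sum>w'\<in>?S. rad_sign w j * rad_sign w' j)"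
      unfolding rad_overlap_def by (intro sum.cong refl sum.swap)
    also have "\<dots> = (\<Sum>j\<in>{1..d}. \<Sum>w\<in>?S. \<Sum>w'\<in>?S. rad_sign w j * rad_sign w' j)"
      by (rule sum.swap)
    finally show ?thesis by (simp add: power2_eq_square sum_product)
  qed
  hence "(\<Sum>w\<in>?S. \<Sum>w'\<in>?S. 1 + a * rad_overlap d w w') \<ge> (real (card ?S))\<^sup>2"
    using assms(1) by (simp add: sum.distrib sum_distrib_left[symmetric] power2_eq_square sum_nonneg)
  also have "(\<Sum>w\<in>?S. \<Sum>w'\<in>?S. 1 + a * rad_overlap d w w') \<le> (\<Sum>w\<in>?S. \<Sum>w'\<in>?S. exp (a * rad_overlap d w w'))"
    by (intro sum_mono exp_ge_add_one_self)
  finally show ?thesis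
    unfolding rad_overlap_mgf_def using \<open>real (card ?S) > 0\<close> by simp
qed

lemma rad_overlap_mgf_le:
  assumes "1 \<le> p" "p \<le> d"
  shows "rad_overlap_mgf d p a \<le> (1 + (cosh a - 1) * p / d) ^ p"
proof -
  let ?S = "rad_support d p" and ?B = "(1 + (cosh a - 1) * p / d) ^ p"
  have "real (card ?S) > 0"
    using rad_support_nonempty[OF assms(2)] finite_rad_support by (simp add: card_gt_0_iff)
  have "(\<Sum>w\<in>?S. \<Sum>w'\<in>?S. exp (a * rad_overlap d w w')) \<le> (\<Sum>w\<in>?S. real (card ?S) * ?B)"
    by (intro sum_mono sum_rad_support_exp_overlap_le assms)
  also have "\<dots> = (real (card ?S))\<^sup>2 * ?B" by (simp add: power2_eq_square)
  finally show ?thesis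
    unfolding rad_overlap_mgf_def using \<open>real (card ?S) > 0\<close> by (simp add: divide_le_eq mult.commute)
qed

lemma cosh_le_one_plus_sq:
  fixes a :: real
  assumes "0 \<le> a" "a \<le> 1"
  shows "cosh a \<le> 1 + a\<^sup>2"
proof -
  have "exp a \<le> 1 + a + a\<^sup>2" by (rule exp_bound) fact+
  moreover have "exp (-a) \<le> 1 - a + a\<^sup>2"
  proof -
    have "exp (-a) * (1 + a) \<le> exp (-a) * exp a"
      using exp_ge_add_one_self[of a] by (intro mult_left_mono) auto
    hence "exp (-a) * (1 + a) \<le> 1" by (simp add: mult_exp_exp)
    hence "exp (-a) \<le> 1 / (1 + a)" using assms by (simp add: field_simps)
    also have "\<dots> \<le> 1 - a + a\<^sup>2"
      using assms by (simp add: field_simps power2_eq_square)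
    finally show ?thesis .
  qed
  ultimately show ?thesis by (simp add: cosh_field_def)
qed

lemma rad_overlap_mgf_le_exp:
  assumes "1 \<le> p" "p \<le> d" "0 \<le> a" "a \<le> 1"
  shows "rad_overlap_mgf d p a \<le> exp ((real p * a)\<^sup>2 / real d)"
proof -
  have "0 \<le> cosh a - 1" using cosh_real_ge_1[of a] by simp
  have "rad_overlap_mgf d p a \<le> (1 + (cosh a - 1) * p / d) ^ p"
    by (rule rad_overlap_mgf_le) fact+
  also have "\<dots> \<le> exp ((cosh a - 1) * p / d) ^ p"
    using \<open>0 \<le> cosh a - 1\<close> by (intro power_mono) (auto simp: add.commute)
  also have "\<dots> = exp (real p * ((cosh a - 1) * p / d))" by (rule exp_of_nat_mult[symmetric])
  also have "\<dots> \<le> exp (real p * (a\<^sup>2 * p / d))"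
    using cosh_le_one_plus_sq[of a] assms by (simp add: mult_left_mono divide_right_mono)
  also have "real p * (a\<^sup>2 * p / d) = (real p * a)\<^sup>2 / real d"
    by (simp add: power2_eq_square)
  finally show ?thesis .
qed

lemma rad_overlap_mgf_bounds:
  assumes "1 \<le> p" "p \<le> d" "0 \<le> x" "x \<le> real p"
  shows "1 \<le> rad_overlap_mgf d p (x / real p) \<and> rad_overlap_mgf d p (x / real p) \<le> exp (x\<^sup>2 / real d)"
  using one_le_rad_overlap_mgf[of "x / real p" p d] rad_overlap_mgf_le_exp[of p d "x / real p"] assms
  by simp

section \<open>Asymptotics\<close>

lemma cusum_scale_eq_hfun:
  assumes "\<tau> \<le> n" "0 < n"
  shows "cusum_scale n \<tau> = real n * hfun n \<tau>"
  using assms by (simp add: cusum_scale_def hfun_def of_nat_diff field_simps)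

lemma eventually_sparse_regime:
  fixes \<beta> :: real and p :: "nat \<Rightarrow> nat" and x :: "nat \<Rightarrow> real"
  assumes \<beta>: "0 < \<beta>" "\<beta> \<le> 1/2"
    and p: "\<exists>c>0. \<exists>C>0. \<forall>\<^sub>F d in sequentially.
              c * real d powr (1 - \<beta>) \<le> real (p d) \<and> real (p d) \<le> C * real d powr (1 - \<beta>)"
    and x: "(\<lambda>d. x d / sqrt (real d)) \<longlonglongrightarrow> 0"
  shows "\<forall>\<^sub>F d in sequentially. 1 \<le> p d \<and> p d \<le> d \<and> x d \<le> real (p d)"
proof -
  obtain c C where "c > 0" "C > 0" and bounds: "\<forall>\<^sub>F d in sequentially.
      c * real d powr (1 - \<beta>) \<le> real (p d) \<and> real (p d) \<le> C * real d powr (1 - \<beta>)"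
    using p by blast
  have "\<forall>\<^sub>F d in sequentially. C \<le> real d powr \<beta>"
    using eventually_ge_at_top[of "nat \<lceil>C powr (1 / \<beta>)\<rceil>"]
  proof eventually_elim
    case (elim d)
    hence "(C powr (1 / \<beta>)) powr \<beta> \<le> real d powr \<beta>"
      using \<beta> by (intro powr_mono2) auto
    thus ?case using \<beta> \<open>C > 0\<close> by (simp add: powr_powr)
  qed
  with bounds eventually_ge_at_top[of 1] order_tendstoD(2)[OF x \<open>c > 0\<close>]
  show ?thesis
  proof eventually_elim
    case (elim d)
    hence "real d \<ge> 1" by simp
    have "sqrt (real d) = real d powr (1/2)" by (simp add: powr_half_sqrt)
    also have "\<dots> \<le> real d powr (1 - \<beta>)" using \<beta> \<open>real d \<ge> 1\<close> by (intro powr_mono) auto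
    finally have "c * sqrt (real d) \<le> real (p d)"
      using elim \<open>c > 0\<close> by (meson mult_left_mono less_imp_le order_trans)
    moreover have "x d < c * sqrt (real d)"
      using elim \<open>real d \<ge> 1\<close> by (simp add: divide_less_eq)
    moreover have "real (p d) \<le> C * real d / real d powr \<beta>"
      using elim \<open>real d \<ge> 1\<close> by (simp add: powr_diff)
    moreover have "C * real d / real d powr \<beta> \<le> real d"
      using elim \<open>real d \<ge> 1\<close> by (simp add: divide_le_eq mult_right_mono)
    moreover have "0 < c * sqrt (real d)" using \<open>c > 0\<close> \<open>real d \<ge> 1\<close> by simp
    ultimately have "0 < real (p d)" "real (p d) \<le> real d" "x d \<le> real (p d)" by linarith+
    thus ?case by simp
  qed
qed

theorem mainTheorem10:
  fixes \<beta> :: real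
    and n \<tau> p :: "nat \<Rightarrow> nat"
    and r :: "nat \<Rightarrow> real"
    and \<theta> :: "nat \<Rightarrow> nat \<Rightarrow> real"
  assumes \<beta>: "0 < \<beta>" "\<beta> \<le> 1/2"
    and n: "\<And>d. n d \<ge> 2"
    and \<tau>: "\<And>d. 1 \<le> \<tau> d \<and> \<tau> d \<le> n d - 1"
    and p: "\<exists>c>0. \<exists>C>0. \<forall>\<^sub>F d in sequentially.
              c * real d powr (1 - \<beta>) \<le> real (p d) \<and> real (p d) \<le> C * real d powr (1 - \<beta>)"
    and lim: "(\<lambda>d. (r d)\<^sup>2 * real (n d) * hfun (n d) (\<tau> d) / sqrt (real d)) \<longlonglongrightarrow> 0"
  shows "(\<lambda>d. chi2_moment d (n d) (\<tau> d) (\<theta> d) (p d) (r d)) \<longlonglongrightarrow> 1"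
proof -
  define x where "x d = cusum_scale (n d) (\<tau> d) * (r d)\<^sup>2" for d
  define q where "q d = rad_overlap_mgf d (p d) (x d / real (p d))" for d
  have \<tau>n: "1 \<le> \<tau> d" "\<tau> d < n d" for d using \<tau>[of d] n[of d] by auto
  have "x d = (r d)\<^sup>2 * real (n d) * hfun (n d) (\<tau> d)" for d
    using \<tau>n[of d] by (simp add: x_def cusum_scale_eq_hfun)
  hence x_lim: "(\<lambda>d. x d / sqrt (real d)) \<longlonglongrightarrow> 0"
    using lim by simp
  have "\<forall>\<^sub>F d in sequentially. chi2_moment d (n d) (\<tau> d) (\<theta> d) (p d) (r d) = ennreal (q d)
          \<and> 1 \<le> q d \<and> q d \<le> exp ((x d / sqrt (real d))\<^sup>2)"
    using eventually_sparse_regime[OF \<beta> p x_lim]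
  proof eventually_elim
    case (elim d)
    have "0 \<le> x d" by (simp add: x_def cusum_scale_nonneg)
    thus ?case
      using elim chi2_moment_eq_rad_overlap_mgf[OF \<tau>n[of d], where d = d and p = "p d" and \<theta> = "\<theta> d" and r = "r d"]
        rad_overlap_mgf_bounds[of "p d" d "x d"]
      by (simp add: q_def x_def power_divide)
  qed
  moreover have "(\<lambda>d. exp ((x d / sqrt (real d))\<^sup>2)) \<longlonglongrightarrow> 1"
    using tendsto_exp[OF tendsto_power[OF x_lim, of 2]] by simp
  ultimately have "q \<longlonglongrightarrow> 1"
    by (intro tendsto_sandwich[of "\<lambda>_. 1" q _ "\<lambda>d. exp ((x d / sqrt (real d))\<^sup>2)"])
       (auto elim: eventually_mono)
  hence "(\<lambda>d. ennreal (q d)) \<longlonglongrightarrow> 1" using tendsto_ennrealI[of q 1] by simp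
  thus ?thesis
    by (rule Lim_transform_eventually) (use \<open>\<forall>\<^sub>F d in sequentially. _\<close> in \<open>auto elim: eventually_mono\<close>)
qed

end
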